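(* Let $1>\delta_1>\delta_2>0$ with $\delta_2<0.5$, and let $c:\mathbb{Z}^2\to\{0,1\}$ be a deterministic function such that for all $x,n$ it is never the case that $c(x,n)=c(x+1,n)=1$. Let $Z(n)$, $n\ge0$, be the random walk on $\mathbb{Z}$ with $Z(0)=0$ and the following transitions: if $Z(n)=x$ and $c(x,n)=c(x-1,n)=0$ then $Z(n+1)=x$; if $c(x,n)=1$ then $Z(n+1)=x+1$ with probability $\delta_1$ and $Z(n+1)=x$ otherwise; if $c(x-1,n)=1$ then $Z(n+1)=x-1$ with probability $\delta_2$ and $Z(n+1)=x$ otherwise. Let $\theta:=\frac{\delta_1\wedge0.5-\delta_2}{\delta_1\wedge0.5+\delta_2}>0$. Then for all $n\ge0$ and all integers $k\ge0$, $$\mathbb{P}[Z(n)\le-k]\le\mathrm{e}^{-\theta k}.$$ *)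

theory Defs
  imports "HOL-Probability.Probability"
begin

text \<open>One step of the walk at time n from position x.  The environment
  c :: int => int => bool encodes c(x,n) = 1 as  c x n.\<close>
definition walk_step :: "(int \<Rightarrow> int \<Rightarrow> bool) \<Rightarrow> real \<Rightarrow> real \<Rightarrow> nat \<Rightarrow> int \<Rightarrow> int pmf" where
  "walk_step c d1 d2 n x =
     (if c x (int n) then map_pmf (\<lambda>b. if b then x + 1 else x) (bernoulli_pmf d1)
      else if c (x - 1) (int n) then map_pmf (\<lambda>b. if b then x - 1 else x) (bernoulli_pmf d2)
      else return_pmf x)"

primrec walk_dist :: "(int \<Rightarrow> int \<Rightarrow> bool) \<Rightarrow> real \<Rightarrow> real \<Rightarrow> nat \<Rightarrow> int pmf" where
  "walk_dist c d1 d2 0 = return_pmf 0"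
| "walk_dist c d1 d2 (Suc n) = bind_pmf (walk_dist c d1 d2 n) (walk_step c d1 d2 n)"

end

theory Submission
  imports Defs
begin

text \<open>Let F(t) = P[Z(n) \<le> t]. In one step, mass crosses the edge between t and t + 1
  only if c(t, n) holds, and then a fraction d1 of the mass at t moves up while a fraction
  d2 of the mass at t + 1 moves down. With m = min d1 (1/2) the new tail is therefore at
  most the convex combination (1 - m - d2) F(t) + m F(t - 1) + d2 F(t + 1). The bound
  F(t) \<le> exp (\<theta> t), trivial for t \<ge> 0, survives this averaging because
  m exp (-\<theta>) + d2 exp \<theta> \<le> m + d2 for \<theta> = (m - d2) / (m + d2).\<close>

lemma exp_weighted_sum_le:
  fixes a b :: real
  assumes "0 < b" "b < a"
  defines "\<theta> \<equiv> (a - b) / (a + b)"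
  shows "a * exp (- \<theta>) + b * exp \<theta> \<le> a + b"
proof -
  define u where "u = exp \<theta>"
  have "0 < \<theta>" using assms by (simp add: \<theta>_def)
  then have u_ge_1: "1 \<le> u" by (simp add: u_def)
  have "2 * b / (a + b) = 1 - \<theta>" using assms by (simp add: \<theta>_def field_simps)
  also have "\<dots> \<le> exp (- \<theta>)" using exp_ge_add_one_self[of "- \<theta>"] by simp
  also have "\<dots> = 1 / u" by (simp add: u_def exp_minus inverse_eq_divide)
  finally have "2 * b * u \<le> a + b" using assms u_ge_1 by (simp add: field_simps)
  then have "b * u \<le> a" using assms by linarith
  then have "(u - 1) * (b * u - a) \<le> 0" using u_ge_1 by (simp add: mult_nonneg_nonpos)
  then have "a / u + b * u \<le> a + b" using u_ge_1 by (simp add: field_simps)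
  then show ?thesis by (simp add: u_def exp_minus field_simps)
qed

lemma measure_pmf_prob_bind:
  "measure_pmf.prob (bind_pmf p f) A = measure_pmf.expectation p (\<lambda>x. measure_pmf.prob (f x) A)"
  unfolding measure_pmf_bind
  by (rule measure_pmf.measure_bind[where N="count_space UNIV"])
     (auto simp: measure_pmf_in_subprob_algebra)

lemma prob_walk_step_atMost:
  assumes "0 \<le> d1" "d1 \<le> 1" "0 \<le> d2" "d2 \<le> 1"
  shows "measure_pmf.prob (walk_step c d1 d2 n x) {..t} =
    (if c x (int n) then (if x + 1 \<le> t then 1 else if x \<le> t then 1 - d1 else 0)
     else if c (x - 1) (int n) then (if x \<le> t then 1 else if x - 1 \<le> t then d2 else 0)
     else if x \<le> t then 1 else 0)"
proof -
  have "Collect Not = {False}" "{b. b} = {True}" by auto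
  then show ?thesis
    unfolding walk_step_def using assms
    by (auto simp: vimage_def indicator_def measure_pmf_single)
qed

lemma prob_walk_step_atMost_le_indicator:
  assumes "\<not> c t (int n)" "0 \<le> d1" "d1 \<le> 1" "0 \<le> d2" "d2 \<le> 1"
  shows "measure_pmf.prob (walk_step c d1 d2 n x) {..t} \<le> indicator {..t} x"
  using assms by (cases "x = t + 1") (auto simp: prob_walk_step_atMost)

lemma prob_walk_step_atMost_le_mixture:
  assumes "c t (int n)" "0 \<le> m" "m \<le> d1" "d1 \<le> 1" "0 \<le> d2" "m + d2 \<le> 1"
  shows "measure_pmf.prob (walk_step c d1 d2 n x) {..t} \<le>
    (1 - m - d2) * indicator {..t} x + m * indicator {..t - 1} x + d2 * indicator {..t + 1} x"
proof -
  consider "x \<le> t - 1" | "x = t" | "x = t + 1" | "x \<ge> t + 2" by linarith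
  then show ?thesis
    by cases (use assms in \<open>auto simp: prob_walk_step_atMost indicator_def\<close>)
qed

lemma tail_bound_bind_walk_step:
  fixes \<theta> m :: real
  assumes "0 \<le> m" "m \<le> d1" "d1 \<le> 1" "0 \<le> d2" "m + d2 \<le> 1"
    and tilt: "m * exp (- \<theta>) + d2 * exp \<theta> \<le> m + d2"
    and tail: "\<And>s. measure_pmf.prob p {..s} \<le> exp (\<theta> * of_int s)"
  shows "measure_pmf.prob (bind_pmf p (walk_step c d1 d2 n)) {..t} \<le> exp (\<theta> * of_int t)"
proof -
  let ?F = "\<lambda>s. measure_pmf.prob p {..s}"
  let ?g = "\<lambda>x. measure_pmf.prob (walk_step c d1 d2 n x) {..t}"
  have g_integrable: "integrable p ?g"
    by (rule measure_pmf.integrable_const_bound[where B=1]) auto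
  have indicator_integrable: "integrable p (indicator A :: int \<Rightarrow> real)" for A
    by (rule measure_pmf.integrable_const_bound[where B=1]) auto
  show ?thesis
  proof (cases "c t (int n)")
    case False
    have "measure_pmf.expectation p ?g \<le> measure_pmf.expectation p (indicator {..t})"
      using False assms
      by (intro integral_mono g_integrable indicator_integrable
          prob_walk_step_atMost_le_indicator) auto
    then show ?thesis using tail[of t] by (simp add: measure_pmf_prob_bind)
  next
    case True
    have "measure_pmf.expectation p ?g \<le> measure_pmf.expectation p
        (\<lambda>x. (1 - m - d2) * indicator {..t} x + m * indicator {..t - 1} x + d2 * indicator {..t + 1} x)"
      using True assms
      by (intro integral_mono g_integrable Bochner_Integration.integrable_add
          integrable_mult_right indicator_integrable prob_walk_step_atMost_le_mixture) auto
    also have "\<dots> = (1 - m - d2) * ?F t + m * ?F (t - 1) + d2 * ?F (t + 1)"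
      by (simp add: Bochner_Integration.integral_add indicator_integrable)
    also have "\<dots> \<le> (1 - m - d2) * exp (\<theta> * t) + m * exp (\<theta> * (t - 1)) + d2 * exp (\<theta> * (t + 1))"
      using assms by (intro add_mono mult_left_mono tail[simplified]) auto
    also have "\<dots> = exp (\<theta> * t) * ((1 - m - d2) + (m * exp (- \<theta>) + d2 * exp \<theta>))"
      by (simp add: algebra_simps flip: exp_add)
    also have "\<dots> \<le> exp (\<theta> * t)"
      using tilt by (simp add: mult_left_le)
    finally show ?thesis by (simp add: measure_pmf_prob_bind)
  qed
qed

theorem lemmaA1:
  fixes c :: "int \<Rightarrow> int \<Rightarrow> bool" and d1 d2 :: real
  assumes "d1 < 1" and "d2 < d1" and "0 < d2" and "d2 < 1/2"
    and "\<And>x n. \<not> (c x n \<and> c (x + 1) n)"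
  defines "\<theta> \<equiv> (min d1 (1/2) - d2) / (min d1 (1/2) + d2)"
  shows "\<theta> > 0 \<and> (\<forall>n k. measure_pmf.prob (walk_dist c d1 d2 n) {z. z \<le> - int k} \<le> exp (- \<theta> * real k))"
proof -
  let ?m = "min d1 (1/2)"
  have m: "0 < d2" "d2 < ?m" "?m \<le> d1" "d1 \<le> 1" "?m + d2 \<le> 1" using assms by auto
  have \<theta>_pos: "\<theta> > 0" unfolding \<theta>_def using m by (intro divide_pos_pos) linarith+
  have tilt: "?m * exp (- \<theta>) + d2 * exp \<theta> \<le> ?m + d2"
    unfolding \<theta>_def using m by (intro exp_weighted_sum_le)
  have tail: "measure_pmf.prob (walk_dist c d1 d2 n) {..t} \<le> exp (\<theta> * of_int t)" for n t
  proof (induction n arbitrary: t)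
    case 0
    show ?case using \<theta>_pos by (simp add: indicator_def)
  next
    case (Suc n)
    show ?case
      using m by (auto intro: tail_bound_bind_walk_step[OF _ _ _ _ _ tilt Suc.IH])
  qed
  show ?thesis
    using \<theta>_pos tail[of _ "- int k" for k] by (simp add: atMost_def)
qed

end
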